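(* In the $N$-customer elementary Indian Buffet Game, assume homogeneity: $u_i(q,n)=u(q,n)$ for all customers $i$, all $q\in Q$ and all $n$, where $u(q,n)$ is non-increasing in $n$ for each $q$. Let $d^*=(d_1^*,\dots,d_N^* )$ be the equilibrium path generated by the strategies $\sigma$, i.e. $n_1=0$, $d_i^*=\sigma_i(n_i)$, $n_{i+1}=n_i+d_i^*$, and let $n^*=\sum_{k=1}^N d_k^*$. Then $d_i^*=1$ if and only if $1\le i\le n^*$.
   Context: Elementary Indian Buffet Game: a single dish whose unknown state $\theta$ lies in a finite set $\Theta$; the quality $q$ lies in a finite set $Q$ with probability mass function $f(q\mid\theta)$ given $\theta$; common belief $p=\{p(\theta)\}_{\theta\in\Theta}$. Customers $1,\dots,N$ decide sequentially whether to request the dish; customer $i$ observes $n_i=\sum_{k<i}d_k$. With utility $u_i(q,n)$ define $\bar U_i(n)=\sum_{\theta\in\Theta}\sum_{q\in Q}u_i(q,n)f(q\mid\theta)p(\theta)$. Recursive procedure $A(n,i)$ returning $(d,m)$: if $i=N$, return $d=1$ if $\bar U_N(n+1)>0$ and $d=0$ otherwise, with $m=0$. If $i<N$: let $(d',m')=A(n+1,i+1)$ and $m=m'+d'$; if $\bar U_i(n+m+1)>0$ return $(1,m)$; otherwise let $(d'',m'')=A(n,i+1)$ and return $(0,m''+d'')$. Define $\sigma_i(n)$ as the first component of $A(n,i)$. *)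

theory Defs
  imports Complex_Main
begin

definition Ubar :: "'th set \<Rightarrow> 'q set \<Rightarrow> ('q \<Rightarrow> 'th \<Rightarrow> real) \<Rightarrow> ('th \<Rightarrow> real)
    \<Rightarrow> ('q \<Rightarrow> nat \<Rightarrow> real) \<Rightarrow> nat \<Rightarrow> real" where
  "Ubar Th Q f p u n = (\<Sum>th\<in>Th. \<Sum>q\<in>Q. u q n * f q th * p th)"

function A :: "(nat \<Rightarrow> nat \<Rightarrow> real) \<Rightarrow> nat \<Rightarrow> nat \<Rightarrow> nat \<Rightarrow> nat \<times> nat" where
  "A U N n i =
     (if N \<le> i then ((if U N (n + 1) > 0 then 1 else 0), 0)
      else (let (d', m') = A U N (n + 1) (i + 1); m = m' + d' in
            if U i (n + m + 1) > 0 then (1, m)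
            else (let (d'', m'') = A U N n (i + 1) in (0, m'' + d''))))"
  by pat_completeness auto
termination by (relation "measure (\<lambda>(U, N, n, i). N - i)") auto

definition sigma :: "(nat \<Rightarrow> nat \<Rightarrow> real) \<Rightarrow> nat \<Rightarrow> nat \<Rightarrow> nat \<Rightarrow> nat" where
  "sigma U N i n = fst (A U N n i)"

end

theory Submission
  imports Defs
begin

text \<open>With a common utility that is non-increasing in the crowd size, the expected utility
  \<open>Ubar\<close> is positive exactly on an initial segment \<open>1..t\<close> of crowd sizes. By induction over
  the recursion, \<open>A(n, i)\<close> then lets customer \<open>i\<close> join iff fewer than \<open>t\<close> customers have
  joined so far, and reports that \<open>min (t - (n + 1)) (N - i)\<close> later customers will join.
  Along the equilibrium path the first \<open>t\<close> customers therefore join and no one else does.\<close>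

declare A.simps[simp del]

lemma Ubar_antimono:
  assumes "\<forall>th\<in>Th. \<forall>q\<in>Q. f q th \<ge> 0" and "\<forall>th\<in>Th. p th \<ge> 0"
    and "\<forall>q\<in>Q. \<forall>a b. a \<le> b \<longrightarrow> u q b \<le> u q a"
    and "a \<le> b"
  shows "Ubar Th Q f p u b \<le> Ubar Th Q f p u a"
  unfolding Ubar_def
  using assms by (intro sum_mono mult_right_mono) auto

lemma antimono_positive_threshold:
  fixes V :: "nat \<Rightarrow> real"
  assumes antimono: "\<And>a b. a \<le> b \<Longrightarrow> V b \<le> V a"
  obtains t where "t \<le> N" and "\<And>k. 1 \<le> k \<Longrightarrow> k \<le> N \<Longrightarrow> 0 < V k \<longleftrightarrow> k \<le> t"
proof (induction N arbitrary: thesis)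
  case 0
  then show ?case by fastforce
next
  case (Suc N)
  show ?case
  proof (cases "0 < V (Suc N)")
    case True
    have "0 < V k" if "k \<le> Suc N" for k
      using antimono[OF that] True by linarith
    then show ?thesis using Suc.prems[of "Suc N"] by auto
  next
    case False
    obtain t where "t \<le> N" and t: "\<And>k. 1 \<le> k \<Longrightarrow> k \<le> N \<Longrightarrow> 0 < V k \<longleftrightarrow> k \<le> t"
      using Suc.IH by blast
    then show ?thesis
      using Suc.prems[of t] False by (metis le_SucE le_SucI not_less_eq_eq)
  qed
qed

lemma A_threshold:
  fixes V :: "nat \<Rightarrow> real"
  assumes threshold: "\<And>k. 1 \<le> k \<Longrightarrow> k \<le> B \<Longrightarrow> 0 < V k \<longleftrightarrow> k \<le> t"
    and "n + (N - i) < B"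
  shows "A (\<lambda>_. V) N n i = (if n < t then 1 else 0, min (t - Suc n) (N - i))"
  using assms(2)
proof (induction "\<lambda>_::nat. V" N n i rule: A.induct)
  case (1 N n i)
  show ?case
  proof (cases "N \<le> i")
    case True
    then show ?thesis using 1(3) threshold by (subst A.simps) auto
  next
    case False
    have join_later: "A (\<lambda>_. V) N (n + 1) (i + 1) =
        (if n + 1 < t then 1 else 0, min (t - Suc (n + 1)) (N - (i + 1)))"
      using 1(1) False 1(3) by auto
    show ?thesis
    proof (cases "n < t")
      case True
      have joiners: "min (t - Suc (n + 1)) (N - (i + 1)) + (if n + 1 < t then 1 else 0)
          = min (t - Suc n) (N - i)"
        using True False by auto
      \<comment> \<open>the later joiners only fill the places up to \<open>t\<close>, so joining still pays\<close>
      have "0 < V (n + min (t - Suc n) (N - i) + 1)"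
        using threshold 1(3) True by auto
      then show ?thesis
        using join_later joiners True False by (subst A.simps) (simp add: Let_def)
    next
      case not_below: False
      then have stay_out: "\<not> 0 < V (n + 1)" using threshold 1(3) False by auto
      have "A (\<lambda>_. V) N n (i + 1) = (0, 0)"
        using 1(2)[OF False refl prod.collapse refl] join_later stay_out not_below 1(3) False
        by auto
      then show ?thesis
        using join_later stay_out not_below False by (subst A.simps) (auto simp: Let_def)
    qed
  qed
qed

lemma equilibrium_path_threshold:
  fixes V :: "nat \<Rightarrow> real"
  assumes threshold: "\<And>k. 1 \<le> k \<Longrightarrow> k \<le> N \<Longrightarrow> 0 < V k \<longleftrightarrow> k \<le> t"
    and "n 1 = 0"
    and path: "\<forall>i\<in>{1..N}. d i = sigma (\<lambda>_. V) N i (n i) \<and> n (i + 1) = n i + d i"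
    and "i \<in> {1..N}"
  shows "d i = (if i \<le> t then 1 else 0)"
proof -
  have decision: "d i = (if n i < t then 1 else 0)" if "i \<in> {1..N}" "n i \<le> i - 1" for i
    using path that A_threshold[OF threshold, where n="n i" and N=N and i=i]
    by (auto simp: sigma_def)
  have "n i = min (i - 1) t" if "i \<in> {1..N}" for i
    using that
  proof (induction i)
    case (Suc i)
    show ?case
    proof (cases "i = 0")
      case False
      with Suc have "i \<in> {1..N}" and "n i = min (i - 1) t" by auto
      then show ?thesis using path decision[of i] by auto
    qed (use \<open>n 1 = 0\<close> in simp)
  qed simp
  then show ?thesis using decision assms(4) by auto
qed

theorem lemma1:
  fixes Th :: "'th set" and Q :: "'q set"
    and f :: "'q \<Rightarrow> 'th \<Rightarrow> real" and p :: "'th \<Rightarrow> real"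
    and u :: "'q \<Rightarrow> nat \<Rightarrow> real" and N :: nat
    and d :: "nat \<Rightarrow> nat" and n :: "nat \<Rightarrow> nat"
  assumes "finite Th" and "finite Q"
    and "\<forall>th\<in>Th. \<forall>q\<in>Q. f q th \<ge> 0"
    and "\<forall>th\<in>Th. (\<Sum>q\<in>Q. f q th) = 1"
    and "\<forall>th\<in>Th. p th \<ge> 0" and "(\<Sum>th\<in>Th. p th) = 1"
    and "\<forall>q\<in>Q. \<forall>a b. a \<le> b \<longrightarrow> u q b \<le> u q a"
    and "n 1 = 0"
    and "\<forall>i\<in>{1..N}. d i = sigma (\<lambda>i. Ubar Th Q f p u) N i (n i) \<and> n (i + 1) = n i + d i"
  shows "\<forall>i\<in>{1..N}. d i = 1 \<longleftrightarrow> 1 \<le> i \<and> i \<le> (\<Sum>k=1..N. d k)"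
proof -
  obtain t where "t \<le> N"
    and threshold: "\<And>k. 1 \<le> k \<Longrightarrow> k \<le> N \<Longrightarrow> 0 < Ubar Th Q f p u k \<longleftrightarrow> k \<le> t"
    using antimono_positive_threshold Ubar_antimono[OF assms(3,5,7)] by blast
  have d: "d i = (if i \<le> t then 1 else 0)" if "i \<in> {1..N}" for i
    using equilibrium_path_threshold[OF threshold assms(8,9) that] .
  have "(\<Sum>k=1..N. d k) = card ({1..N} \<inter> {..t})"
    by (simp add: d sum.If_cases Int_def)
  also have "{1..N} \<inter> {..t} = {1..t}"
    using \<open>t \<le> N\<close> by auto
  finally have "(\<Sum>k=1..N. d k) = t" by simp
  then show ?thesis using d by auto
qed

end
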